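(* Let $W:\mathbb{N}^\star\times\mathbb{N}^\star\to\mathbb{C}$ be such that $F\,\square_W\,G\in\mathbb{M}$ and $F\,\square_W\,G=G\,\square_W\,F$ for all $F,G\in\mathbb{M}$. Then $(F\,\square_W\,G)\,\square_W\,H=F\,\square_W\,(G\,\square_W\,H)$ for all $F,G,H\in\mathbb{M}$ if and only if $W(a,b)W(ab,c)=W(b,c)W(bc,a)$ for all $a,b,c\in\mathbb{N}^\star$.
   Context: $\mathbb{M}$ is the set of functions $F:\mathbb{N}^\star\to\mathbb{C}$ with $F(1)=1$ and $F(ab)=F(a)F(b)$ whenever $\gcd(a,b)=1$. For a weight $W$, $(F\,\square_W\,G)(m)=\sum_{ab=m}F(a)G(b)W(a,b)$. *)

theory Defs
  imports Complex_Main
begin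

text \<open>Functions on the positive integers are represented as functions on nat;
  values at 0 are ignored throughout.\<close>

definition multM :: "(nat \<Rightarrow> complex) set" where
  "multM = {F. F 1 = 1 \<and> (\<forall>a b. 0 < a \<longrightarrow> 0 < b \<longrightarrow> coprime a b \<longrightarrow> F (a * b) = F a * F b)}"

definition wconv :: "(nat \<Rightarrow> nat \<Rightarrow> complex) \<Rightarrow> (nat \<Rightarrow> complex) \<Rightarrow> (nat \<Rightarrow> complex) \<Rightarrow> nat \<Rightarrow> complex" where
  "wconv W F G m = (\<Sum>a\<in>{a. a dvd m}. F a * G (m div a) * W a (m div a))"

definition eqpos :: "(nat \<Rightarrow> complex) \<Rightarrow> (nat \<Rightarrow> complex) \<Rightarrow> bool" where
  "eqpos F G \<longleftrightarrow> (\<forall>m>0. F m = G m)"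

end

theory Submission
  imports Defs
begin

text \<open>Both iterated products expand into one sum over the factorizations \<open>m = a b c\<close>, with
  weights \<open>W a b W (ab) c\<close> and \<open>W b c W a (bc)\<close> respectively; commutativity forces \<open>W\<close> to be
  symmetric, so the second weight equals \<open>W b c W (bc) a\<close> and the cocycle identity gives
  associativity. Conversely, the divisor indicators \<open>n \<mapsto> [n | a]\<close> are multiplicative, and
  evaluating \<open>(1_a \<box> 1_b) \<box> 1_c\<close> at \<open>abc\<close> isolates the single term \<open>(a, b, c)\<close> of that sum.\<close>

definition triple_factorizations :: "nat \<Rightarrow> (nat \<times> nat \<times> nat) set" where
  "triple_factorizations m = {(a, b, c). a * b * c = m}"

lemma finite_triple_factorizations:
  assumes "0 < m"
  shows "finite (triple_factorizations m)"
proof -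
  have "triple_factorizations m \<subseteq> {..m} \<times> {..m} \<times> {..m}"
    using assms by (auto simp: triple_factorizations_def)
  then show ?thesis
    by (rule finite_subset) auto
qed

lemma wconv_wconv_left_eq_sum:
  assumes "0 < m"
  shows "wconv W (wconv W F G) H m =
     (\<Sum>(a, b, c)\<in>triple_factorizations m. F a * G b * H c * (W a b * W (a * b) c))"
proof -
  have "wconv W (wconv W F G) H m =
     (\<Sum>d\<in>{d. d dvd m}. \<Sum>a\<in>{a. a dvd d}.
        F a * G (d div a) * W a (d div a) * H (m div d) * W d (m div d))"
    unfolding wconv_def by (simp add: sum_distrib_right)
  also have "\<dots> = (\<Sum>(d, a)\<in>(SIGMA d:{d. d dvd m}. {a. a dvd d}).
        F a * G (d div a) * W a (d div a) * H (m div d) * W d (m div d))"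
    using assms by (intro sum.Sigma) (auto intro: finite_divisors_nat dvd_pos_nat)
  also have "\<dots> = (\<Sum>(a, b, c)\<in>triple_factorizations m. F a * G b * H c * (W a b * W (a * b) c))"
    by (rule sum.reindex_bij_witness[where j = "\<lambda>(d, a). (a, d div a, m div d)"
          and i = "\<lambda>(a, b, c). (a * b, a)"])
      (use assms in \<open>auto simp: triple_factorizations_def\<close>)
  finally show ?thesis .
qed

lemma wconv_wconv_right_eq_sum:
  assumes "0 < m"
  shows "wconv W F (wconv W G H) m =
     (\<Sum>(a, b, c)\<in>triple_factorizations m. F a * G b * H c * (W b c * W a (b * c)))"
proof -
  have "wconv W F (wconv W G H) m =
     (\<Sum>a\<in>{a. a dvd m}. \<Sum>b\<in>{b. b dvd m div a}.
        F a * G b * H (m div a div b) * W b (m div a div b) * W a (m div a))"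
    unfolding wconv_def by (simp add: sum_distrib_left sum_distrib_right mult_ac)
  also have "\<dots> = (\<Sum>(a, b)\<in>(SIGMA a:{a. a dvd m}. {b. b dvd m div a}).
        F a * G b * H (m div a div b) * W b (m div a div b) * W a (m div a))"
    using assms by (intro sum.Sigma) (auto intro!: finite_divisors_nat simp: dvd_div_eq_0_iff)
  also have "\<dots> = (\<Sum>(a, b, c)\<in>triple_factorizations m. F a * G b * H c * (W b c * W a (b * c)))"
    by (rule sum.reindex_bij_witness[where j = "\<lambda>(a, b). (a, b, m div a div b)"
          and i = "\<lambda>(a, b, c). (a, b)"])
      (use assms in \<open>auto simp: triple_factorizations_def mult_ac\<close>)
  finally show ?thesis .
qed

lemma dvd_factors_eq_if_prod_eq:
  fixes a b c a' b' c' :: nat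
  assumes "0 < a" "0 < b" "0 < c" "a' dvd a" "b' dvd b" "c' dvd c" "a' * b' * c' = a * b * c"
  shows "a' = a \<and> b' = b \<and> c' = c"
proof -
  obtain k l n where a: "a = a' * k" and b: "b = b' * l" and c: "c = c' * n"
    using assms by blast
  have "a' * b' * c' * (k * l * n) = a' * b' * c' * 1"
    using assms(7) unfolding a b c by (simp add: ac_simps)
  moreover have "a' * b' * c' \<noteq> 0"
    using assms by auto
  ultimately have "k * l * n = 1"
    by (metis mult_left_cancel)
  then show ?thesis
    using a b c by simp
qed

definition divisor_indicator :: "nat \<Rightarrow> nat \<Rightarrow> complex" where
  "divisor_indicator a n = (if n dvd a then 1 else 0)"

lemma divisor_indicator_in_multM: "divisor_indicator a \<in> multM"
  unfolding multM_def divisor_indicator_def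
  by (auto simp: divides_mult dest: dvd_mult_left dvd_mult_right)

lemma wconv_divisor_indicator:
  assumes "0 < a" "0 < b"
  shows "wconv W (divisor_indicator a) (divisor_indicator b) (a * b) = W a b"
proof -
  have "wconv W (divisor_indicator a) (divisor_indicator b) (a * b) =
     (\<Sum>d\<in>{a}. divisor_indicator a d * divisor_indicator b (a * b div d) * W d (a * b div d))"
    unfolding wconv_def
  proof (rule sum.mono_neutral_right)
    show "\<forall>d\<in>{d. d dvd a * b} - {a}.
        divisor_indicator a d * divisor_indicator b (a * b div d) * W d (a * b div d) = 0"
    proof
      fix d assume d: "d \<in> {d. d dvd a * b} - {a}"
      then have "d * (a * b div d) * 1 = a * b * 1"
        by simp
      with d assms have "\<not> (d dvd a \<and> a * b div d dvd b)"
        using dvd_factors_eq_if_prod_eq[of a b 1 d "a * b div d" 1] by auto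
      then show "divisor_indicator a d * divisor_indicator b (a * b div d) * W d (a * b div d) = 0"
        by (auto simp: divisor_indicator_def)
    qed
  qed (use assms in \<open>auto simp: finite_divisors_nat\<close>)
  also have "\<dots> = W a b"
    using assms by (simp add: divisor_indicator_def)
  finally show ?thesis .
qed

lemma sum_triple_factorizations_divisor_indicator:
  assumes "0 < a" "0 < b" "0 < c"
  shows "(\<Sum>(x, y, z)\<in>triple_factorizations (a * b * c).
       divisor_indicator a x * divisor_indicator b y * divisor_indicator c z * f x y z) = f a b c"
proof -
  let ?g = "\<lambda>(x, y, z). divisor_indicator a x * divisor_indicator b y * divisor_indicator c z * f x y z"
  have "sum ?g (triple_factorizations (a * b * c)) = sum ?g {(a, b, c)}"
  proof (rule sum.mono_neutral_right)
    show "\<forall>t\<in>triple_factorizations (a * b * c) - {(a, b, c)}. ?g t = 0"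
    proof
      fix t assume t: "t \<in> triple_factorizations (a * b * c) - {(a, b, c)}"
      obtain x y z where xyz: "t = (x, y, z)"
        by (cases t) auto
      have "\<not> (x dvd a \<and> y dvd b \<and> z dvd c)"
        using t dvd_factors_eq_if_prod_eq[OF assms, of x y z]
        unfolding xyz by (auto simp: triple_factorizations_def)
      then show "?g t = 0"
        unfolding xyz by (auto simp: divisor_indicator_def)
    qed
  qed (use assms finite_triple_factorizations[of "a * b * c"] in \<open>auto simp: triple_factorizations_def\<close>)
  then show ?thesis
    by (simp add: divisor_indicator_def)
qed

lemma weight_sym_if_wconv_commute:
  assumes comm: "\<forall>F\<in>multM. \<forall>G\<in>multM. eqpos (wconv W F G) (wconv W G F)"
    and "0 < a" "0 < b"
  shows "W a b = W b a"
proof -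
  have "wconv W (divisor_indicator a) (divisor_indicator b) (a * b) =
      wconv W (divisor_indicator b) (divisor_indicator a) (a * b)"
    using comm divisor_indicator_in_multM assms unfolding eqpos_def by auto
  then show ?thesis
    using assms wconv_divisor_indicator[of a b W] wconv_divisor_indicator[of b a W]
    by (simp add: mult.commute)
qed

theorem mainTheorem7:
  fixes W :: "nat \<Rightarrow> nat \<Rightarrow> complex"
  assumes closed: "\<forall>F\<in>multM. \<forall>G\<in>multM. wconv W F G \<in> multM"
    and comm: "\<forall>F\<in>multM. \<forall>G\<in>multM. eqpos (wconv W F G) (wconv W G F)"
  shows "(\<forall>F\<in>multM. \<forall>G\<in>multM. \<forall>H\<in>multM.
            eqpos (wconv W (wconv W F G) H) (wconv W F (wconv W G H)))
         \<longleftrightarrow> (\<forall>a>0. \<forall>b>0. \<forall>c>0. W a b * W (a * b) c = W b c * W (b * c) a)"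
proof
  assume assoc: "\<forall>F\<in>multM. \<forall>G\<in>multM. \<forall>H\<in>multM.
            eqpos (wconv W (wconv W F G) H) (wconv W F (wconv W G H))"
  show "\<forall>a>0. \<forall>b>0. \<forall>c>0. W a b * W (a * b) c = W b c * W (b * c) a"
  proof (intro allI impI)
    fix a b c :: nat
    assume pos: "0 < a" "0 < b" "0 < c"
    let ?\<delta> = divisor_indicator
    have "wconv W (wconv W (?\<delta> a) (?\<delta> b)) (?\<delta> c) (a * b * c) =
        wconv W (?\<delta> a) (wconv W (?\<delta> b) (?\<delta> c)) (a * b * c)"
      using assoc divisor_indicator_in_multM pos unfolding eqpos_def by simp
    then have "W a b * W (a * b) c = W b c * W a (b * c)"
      using pos by (simp add: wconv_wconv_left_eq_sum wconv_wconv_right_eq_sum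
          sum_triple_factorizations_divisor_indicator)
    then show "W a b * W (a * b) c = W b c * W (b * c) a"
      using weight_sym_if_wconv_commute[OF comm, of a "b * c"] pos by simp
  qed
next
  assume cocycle: "\<forall>a>0. \<forall>b>0. \<forall>c>0. W a b * W (a * b) c = W b c * W (b * c) a"
  have "wconv W (wconv W F G) H m = wconv W F (wconv W G H) m" if "0 < m" for F G H m
    unfolding wconv_wconv_left_eq_sum[OF that] wconv_wconv_right_eq_sum[OF that]
  proof (rule sum.cong[OF refl], clarify)
    fix a b c assume "(a, b, c) \<in> triple_factorizations m"
    then have "0 < a" "0 < b" "0 < c"
      using that by (auto simp: triple_factorizations_def)
    then show "F a * G b * H c * (W a b * W (a * b) c) = F a * G b * H c * (W b c * W a (b * c))"
      using cocycle weight_sym_if_wconv_commute[OF comm, of a "b * c"] by auto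
  qed
  then show "\<forall>F\<in>multM. \<forall>G\<in>multM. \<forall>H\<in>multM.
      eqpos (wconv W (wconv W F G) H) (wconv W F (wconv W G H))"
    unfolding eqpos_def by blast
qed

end
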